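(* Let $H=(V,E)$ be an uncapacitated hypergraph, let $v_1,\ldots,v_n$ be an MA-ordering of $H$, fix a head ordering of the edges induced by it, let $k$ be a non-negative integer, and let $H_k$ be the hypergraph constructed from $H$ with respect to this ordering as described in the context. Then for every $A\subseteq V$, $|\delta_{H_k}(A)|\ge \min\{k,|\delta_H(A)|\}$.
   Context: A hypergraph $H=(V,E)$ has a finite vertex set $V$ and a finite multiset $E$ of edges, each a subset of $V$; uncapacitated means all edges have capacity $1$ (parallel edges allowed). For $S\subseteq V$, $\delta_H(S)$ is the set (multiset) of edges meeting both $S$ and $V\setminus S$. For subsets $A_1,\ldots,A_k\subseteq V$, $d(A_1,\ldots,A_k)$ is the number of edges that intersect every $A_i$; a single vertex $v$ stands for $\{v\}$. For an ordering $v_1,\ldots,v_n$ of $V$ let $V_i=\{v_1,\ldots,v_i\}$ ($V_0=\emptyset$). The ordering is an MA-ordering if $d(V_{i-1},v_i)\ge d(V_{i-1},v_j)$ for all $1\le i<j\le n$. The head $h(e)$ of an edge $e$ is the vertex of $e$ with smallest index. An ordering $e_1,\ldots,e_m$ of the edges is a head ordering if the index of $h(e_i)$ is non-decreasing in $i$. An edge $e$ is a backward edge of $v$ if $v\in e$ and $h(e)\ne v$. $D_k(v)$ denotes the first $k$ backward edges of $v$ in the head ordering (all of them if $v$ has fewer than $k$). For each $e\in E$ let $e'=\{v\in e : e\in D_k(v)\}\cup\{h(e)\}$, and let $H_k=(V,E_k)$ with $E_k$ the multiset $\{e' : e\in E,\ |e'|\ge 2\}$. *)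

theory Defs
  imports Main "HOL-Library.Multiset"
begin

(* Hypergraph: vertex set V = set vs, edges: a multiset E of vertex sets.
   The vertex ordering v_1..v_n is the list vs (0-based indices in Isabelle). *)

definition dcount :: "'a set multiset \<Rightarrow> 'a set list \<Rightarrow> nat" where
  "dcount E As = size (filter_mset (\<lambda>e. \<forall>A\<in>set As. e \<inter> A \<noteq> {}) E)"

definition cut_size :: "'a set \<Rightarrow> 'a set multiset \<Rightarrow> 'a set \<Rightarrow> nat" where
  "cut_size V E S = size (filter_mset (\<lambda>e. e \<inter> S \<noteq> {} \<and> e \<inter> (V - S) \<noteq> {}) E)"

(* MA-ordering: d(V_{i-1}, v_i) >= d(V_{i-1}, v_j) for i < j  (0-based: V_{i-1} = set (take i vs)) *)
definition is_MA_ordering :: "'a list \<Rightarrow> 'a set multiset \<Rightarrow> bool" where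
  "is_MA_ordering vs E \<longleftrightarrow> distinct vs \<and>
     (\<forall>i j. i < j \<and> j < length vs \<longrightarrow>
        dcount E [set (take i vs), {vs ! j}] \<le> dcount E [set (take i vs), {vs ! i}])"

definition hidx :: "'a list \<Rightarrow> 'a set \<Rightarrow> nat" where
  "hidx vs e = (LEAST i. i < length vs \<and> vs ! i \<in> e)"

definition head :: "'a list \<Rightarrow> 'a set \<Rightarrow> 'a" where
  "head vs e = vs ! hidx vs e"

definition is_head_ordering :: "'a list \<Rightarrow> 'a set multiset \<Rightarrow> 'a set list \<Rightarrow> bool" where
  "is_head_ordering vs E es \<longleftrightarrow> mset es = E \<and> sorted (map (hidx vs) es)"

definition backward :: "'a list \<Rightarrow> 'a set list \<Rightarrow> 'a \<Rightarrow> nat \<Rightarrow> bool" where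
  "backward vs es v p \<longleftrightarrow> p < length es \<and> v \<in> es ! p \<and> head vs (es ! p) \<noteq> v"

definition in_Dk :: "nat \<Rightarrow> 'a list \<Rightarrow> 'a set list \<Rightarrow> 'a \<Rightarrow> nat \<Rightarrow> bool" where
  "in_Dk k vs es v p \<longleftrightarrow> backward vs es v p \<and> card {q. q < p \<and> backward vs es v q} < k"

definition trunc_edge :: "nat \<Rightarrow> 'a list \<Rightarrow> 'a set list \<Rightarrow> nat \<Rightarrow> 'a set" where
  "trunc_edge k vs es p = {v \<in> es ! p. in_Dk k vs es v p} \<union> {head vs (es ! p)}"

definition Ek :: "nat \<Rightarrow> 'a list \<Rightarrow> 'a set list \<Rightarrow> 'a set multiset" where
  "Ek k vs es = mset (filter (\<lambda>e. 2 \<le> card e) (map (trunc_edge k vs es) [0..<length es]))"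

end

theory Submission
  imports Defs
begin

text \<open>
  If every edge of \<open>\<delta>\<^sub>H(A)\<close> still crosses \<open>A\<close> after truncation, then
  \<open>|\<delta>\<^sub>H\<^sub>k(A)| \<ge> |\<delta>\<^sub>H(A)|\<close>. Otherwise some crossing edge \<open>e\<close> with head
  \<open>v\<^sub>a\<close> drops a vertex \<open>v\<^sub>b\<close> on the other side of \<open>A\<close>; this happens only because
  \<open>v\<^sub>b\<close> already has \<open>k\<close> earlier backward edges, whose heads precede \<open>v\<^sub>a\<close> in the
  head ordering. Pick \<open>l \<in> (a, b]\<close> with \<open>v\<^sub>l\<^sub>-\<^sub>1\<close> and \<open>v\<^sub>l\<close> on different sides of \<open>A\<close>.
  Those \<open>k\<close> edges give \<open>d(V\<^sub>l\<^sub>-\<^sub>1, v\<^sub>b) \<ge> k\<close>, hence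
  \<open>d(V\<^sub>l\<^sub>-\<^sub>1, v\<^sub>l) \<ge> k\<close> by the MA property. Truncation keeps at least
  \<open>min(k, d(V\<^sub>i\<^sub>-\<^sub>1, v\<^sub>i))\<close> of the edges counted by
  \<open>d(V\<^sub>i\<^sub>-\<^sub>1, v\<^sub>i)\<close> and at most \<open>k\<close> of those counted by
  \<open>d(V\<^sub>i\<^sub>-\<^sub>1, v\<^sub>j)\<close>, \<open>j > i\<close>, so \<open>v\<^sub>1, \<dots>, v\<^sub>n\<close> is an MA-ordering of
  \<open>H\<^sub>k\<close> as well, with \<open>d\<^sub>H\<^sub>k(V\<^sub>l\<^sub>-\<^sub>1, v\<^sub>l) \<ge> k\<close>. Finally, in any
  MA-ordering a set separating \<open>v\<^sub>l\<^sub>-\<^sub>1\<close> from \<open>v\<^sub>l\<close> is crossed by at least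
  \<open>d(V\<^sub>l\<^sub>-\<^sub>1, v\<^sub>l)\<close> edges.
\<close>

lemma size_filter_mset_mono:
  "(\<And>x. x \<in># M \<Longrightarrow> P x \<Longrightarrow> Q x) \<Longrightarrow> size (filter_mset P M) \<le> size (filter_mset Q M)"
  by (induction M) auto

lemma size_filter_mset_le_add:
  "(\<And>x. x \<in># M \<Longrightarrow> P x \<Longrightarrow> Q x \<or> R x) \<Longrightarrow>
   size (filter_mset P M) \<le> size (filter_mset Q M) + size (filter_mset R M)"
  by (induction M) auto

lemma size_filter_mset_add_le:
  "(\<And>x. x \<in># M \<Longrightarrow> Q x \<Longrightarrow> \<not> R x) \<Longrightarrow> (\<And>x. x \<in># M \<Longrightarrow> Q x \<or> R x \<Longrightarrow> P x) \<Longrightarrow>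
   size (filter_mset Q M) + size (filter_mset R M) \<le> size (filter_mset P M)"
proof (induction M)
  case (add x M)
  then have "size (filter_mset Q M) + size (filter_mset R M) \<le> size (filter_mset P M)"
    using add.prems by (intro add.IH) auto
  then show ?case using add.prems by auto
qed simp

lemma size_filter_mset_mset:
  "size (filter_mset P (mset xs)) = card {p. p < length xs \<and> P (xs ! p)}"
  by (metis length_filter_conv_card mset_filter size_mset)

lemma two_le_card: "finite X \<Longrightarrow> x \<in> X \<Longrightarrow> y \<in> X \<Longrightarrow> x \<noteq> y \<Longrightarrow> 2 \<le> card X"
  by (metis card_2_iff card_mono empty_subsetI insert_subset)

lemma card_rank_less:
  fixes B :: "'b::linorder set"
  assumes "finite B"
  shows "card {p \<in> B. card {q \<in> B. q < p} < k} = min k (card B)"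
  using assms
proof (induction B rule: finite_linorder_max_induct)
  case (insert b B)
  define rank where "rank C p = card {q \<in> C. q < p}" for C and p :: 'b
  have "b \<notin> B" using insert.hyps(2) by blast
  have "rank (insert b B) b = card B"
    unfolding rank_def using insert.hyps(2) by (intro arg_cong[where f = card]) auto
  moreover have "rank (insert b B) p = rank B p" if "p \<in> B" for p
    unfolding rank_def using insert.hyps(2) that by (intro arg_cong[where f = card]) auto
  ultimately have "{p \<in> insert b B. rank (insert b B) p < k} =
      {p \<in> B. rank B p < k} \<union> {p \<in> {b}. card B < k}"
    using \<open>b \<notin> B\<close> by auto
  moreover have "card {p \<in> B. rank B p < k} = min k (card B)"
    using insert.IH unfolding rank_def .
  ultimately show ?case
    using \<open>b \<notin> B\<close> insert.hyps(1) unfolding rank_def[symmetric]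
    by (cases "card B < k") auto
qed simp

lemma exists_run_start:
  fixes l :: nat
  assumes "0 < l" "Q (l - 1)"
  shows "\<exists>i < l. (\<forall>m. i \<le> m \<and> m < l \<longrightarrow> Q m) \<and> (0 < i \<longrightarrow> \<not> Q (i - 1))"
  using assms
proof (induction l)
  case (Suc n)
  have Qn: "Q n" using Suc.prems(2) by simp
  show ?case
  proof (cases "0 < n \<and> Q (n - 1)")
    case True
    then obtain i where "i < n" "\<forall>m. i \<le> m \<and> m < n \<longrightarrow> Q m" "0 < i \<longrightarrow> \<not> Q (i - 1)"
      using Suc.IH True by auto
    then have "\<forall>m. i \<le> m \<and> m < Suc n \<longrightarrow> Q m" using Qn by (auto simp: less_Suc_eq)
    with \<open>i < n\<close> \<open>0 < i \<longrightarrow> \<not> Q (i - 1)\<close> show ?thesis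
      by (intro exI[of _ i]) simp
  next
    case False
    then have "\<forall>m. n \<le> m \<and> m < Suc n \<longrightarrow> Q m" "0 < n \<longrightarrow> \<not> Q (n - 1)"
      using Qn by (auto simp: less_Suc_eq)
    then show ?thesis by blast
  qed
qed simp

lemma exists_switch:
  fixes P :: "nat \<Rightarrow> bool"
  assumes "a < b" "P a \<noteq> P b"
  shows "\<exists>l. a < l \<and> l \<le> b \<and> P (l - 1) \<noteq> P l"
proof -
  obtain i where i: "i < Suc b" "\<forall>m. i \<le> m \<and> m < Suc b \<longrightarrow> P m = P b"
    "0 < i \<longrightarrow> P (i - 1) \<noteq> P b"
    using exists_run_start[OF zero_less_Suc, of "\<lambda>m. P m = P b"] by (metis diff_Suc_1)
  have "a < i"
  proof (rule ccontr)
    assume "\<not> a < i"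
    then show False using i(2)[rule_format, of a] assms by simp
  qed
  moreover have "P i = P b" using i(2)[rule_format, of i] i(1) by simp
  ultimately show ?thesis using i(1,3) by (intro exI[of _ i]) simp
qed

lemma in_set_take_iff: "x \<in> set (take l xs) \<longleftrightarrow> (\<exists>m < l. m < length xs \<and> xs ! m = x)"
  by (auto simp: in_set_conv_nth)

lemma nth_mem_set_take: "m < l \<Longrightarrow> m < length xs \<Longrightarrow> xs ! m \<in> set (take l xs)"
  by (metis in_set_conv_nth length_take min_less_iff_conj nth_take)

lemma nth_in_set_take_iff:
  assumes "distinct xs" "i < length xs"
  shows "xs ! i \<in> set (take l xs) \<longleftrightarrow> i < l"
  using assms by (auto simp: in_set_take_iff nth_eq_iff_index_eq)

lemma hidx_le: "i < length vs \<Longrightarrow> vs ! i \<in> e \<Longrightarrow> hidx vs e \<le> i"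
  unfolding hidx_def by (rule Least_le) simp

lemma hidx_less_length_and_head_mem:
  assumes "e \<subseteq> set vs" "e \<noteq> {}"
  shows "hidx vs e < length vs" "head vs e \<in> e"
proof -
  obtain i where "i < length vs" "vs ! i \<in> e"
    using assms by (metis ex_in_conv in_set_conv_nth subsetD)
  then show "hidx vs e < length vs" "head vs e \<in> e"
    using LeastI[of "\<lambda>i. i < length vs \<and> vs ! i \<in> e" i] unfolding hidx_def head_def by auto
qed

lemma meets_prefix_iff_hidx_less:
  assumes "e \<subseteq> set vs"
  shows "e \<inter> set (take l vs) \<noteq> {} \<longleftrightarrow> e \<noteq> {} \<and> hidx vs e < l"
proof
  assume "e \<inter> set (take l vs) \<noteq> {}"
  then obtain m where "m < l" "m < length vs" "vs ! m \<in> e" by (auto simp: in_set_take_iff)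
  then show "e \<noteq> {} \<and> hidx vs e < l" using hidx_le[of m vs e] by auto
next
  assume "e \<noteq> {} \<and> hidx vs e < l"
  then show "e \<inter> set (take l vs) \<noteq> {}"
    using hidx_less_length_and_head_mem[OF assms] nth_mem_set_take[of "hidx vs e" l vs]
    unfolding head_def by blast
qed

lemma head_mem_prefix_iff:
  assumes "distinct vs" "e \<subseteq> set vs" "e \<noteq> {}"
  shows "head vs e \<in> set (take l vs) \<longleftrightarrow> hidx vs e < l"
  unfolding head_def using nth_in_set_take_iff[OF assms(1) hidx_less_length_and_head_mem(1)[OF assms(2,3)]] .

lemma backward_nth_iff:
  assumes "distinct vs" "i < length vs" "p < length es" "es ! p \<subseteq> set vs"
  shows "backward vs es (vs ! i) p \<longleftrightarrow> vs ! i \<in> es ! p \<and> es ! p \<inter> set (take i vs) \<noteq> {}"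
proof (cases "vs ! i \<in> es ! p")
  case True
  then have "es ! p \<noteq> {}" "hidx vs (es ! p) \<le> i" using hidx_le[OF assms(2)] by auto
  moreover have "head vs (es ! p) = vs ! i \<longleftrightarrow> hidx vs (es ! p) = i"
    using hidx_less_length_and_head_mem[OF assms(4) \<open>es ! p \<noteq> {}\<close>] assms(1,2)
    unfolding head_def by (simp add: nth_eq_iff_index_eq)
  ultimately show ?thesis
    using True assms(3) meets_prefix_iff_hidx_less[OF assms(4)] unfolding backward_def by auto
qed (simp add: backward_def)

lemma dcount_mset_eq_card:
  "dcount (mset es) [X, {y}] = card {p. p < length es \<and> es ! p \<inter> X \<noteq> {} \<and> y \<in> es ! p}"
  unfolding dcount_def size_filter_mset_mset by (rule arg_cong[where f = card]) auto

lemma dcount_prefix_nth_eq_card_backward: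
  assumes "distinct vs" "i < length vs" "\<And>e. e \<in> set es \<Longrightarrow> e \<subseteq> set vs"
  shows "dcount (mset es) [set (take i vs), {vs ! i}] = card {p. backward vs es (vs ! i) p}"
proof -
  have "backward vs es (vs ! i) p \<longleftrightarrow> p < length es \<and> es ! p \<inter> set (take i vs) \<noteq> {} \<and> vs ! i \<in> es ! p"
    for p
    using backward_nth_iff[OF assms(1,2), where p = p and es = es] assms(3)[OF nth_mem, of p]
    by (auto simp: backward_def)
  then show ?thesis unfolding dcount_mset_eq_card by simp
qed

lemma card_in_Dk: "card {p. in_Dk k vs es v p} = min k (card {p. backward vs es v p})"
proof -
  define B where "B = {p. backward vs es v p}"
  have "finite B" unfolding B_def backward_def by (rule finite_subset[of _ "{..<length es}"]) auto
  have "{q \<in> B. q < p} = {q. q < p \<and> backward vs es v q}" for p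
    unfolding B_def by blast
  then have "{p. in_Dk k vs es v p} = {p \<in> B. card {q \<in> B. q < p} < k}"
    unfolding in_Dk_def by (simp add: B_def)
  then show ?thesis using card_rank_less[OF \<open>finite B\<close>] by (simp add: B_def)
qed

subsection \<open>The truncated hypergraph\<close>

lemma head_mem_trunc_edge: "head vs (es ! p) \<in> trunc_edge k vs es p"
  unfolding trunc_edge_def by simp

lemma trunc_edge_subset:
  assumes "es ! p \<subseteq> set vs" "es ! p \<noteq> {}"
  shows "trunc_edge k vs es p \<subseteq> es ! p"
  using hidx_less_length_and_head_mem(2)[OF assms] unfolding trunc_edge_def by auto

lemma finite_trunc_edge: "finite (es ! p) \<Longrightarrow> finite (trunc_edge k vs es p)"
  unfolding trunc_edge_def by simp

lemma size_filter_Ek: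
  "size (filter_mset P (Ek k vs es)) =
    card {p. p < length es \<and> 2 \<le> card (trunc_edge k vs es p) \<and> P (trunc_edge k vs es p)}"
  unfolding Ek_def mset_filter filter_filter_mset size_filter_mset_mset
  by (intro arg_cong[where f = card]) auto

lemma dcount_Ek_prefix_nth_ge:
  assumes "distinct vs" "i < length vs" "\<And>e. e \<in> set es \<Longrightarrow> e \<subseteq> set vs"
  shows "min k (dcount (mset es) [set (take i vs), {vs ! i}]) \<le>
    dcount (Ek k vs es) [set (take i vs), {vs ! i}]"
proof -
  let ?t = "trunc_edge k vs es"
  have "{p. in_Dk k vs es (vs ! i) p} \<subseteq>
      {p. p < length es \<and> 2 \<le> card (?t p) \<and> ?t p \<inter> set (take i vs) \<noteq> {} \<and> vs ! i \<in> ?t p}"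
  proof (intro subsetI CollectI)
    fix p
    assume "p \<in> {p. in_Dk k vs es (vs ! i) p}"
    then have "in_Dk k vs es (vs ! i) p" and bw: "backward vs es (vs ! i) p" by (auto simp: in_Dk_def)
    then have "p < length es" and vi: "vs ! i \<in> ?t p" by (auto simp: in_Dk_def backward_def trunc_edge_def)
    then have sub: "es ! p \<subseteq> set vs" and ne: "es ! p \<noteq> {}" using assms(3) bw by (auto simp: backward_def)
    have "hidx vs (es ! p) < i"
      using bw backward_nth_iff[OF assms(1,2) \<open>p < length es\<close> sub] meets_prefix_iff_hidx_less[OF sub]
      by blast
    then have hd: "head vs (es ! p) \<in> set (take i vs)" using head_mem_prefix_iff[OF assms(1) sub ne] by blast
    moreover have "vs ! i \<notin> set (take i vs)" using nth_in_set_take_iff[OF assms(1,2)] by blast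
    ultimately have "2 \<le> card (?t p)"
      using two_le_card[OF finite_trunc_edge vi head_mem_trunc_edge] finite_subset[OF sub] by fastforce
    then show "p < length es \<and> 2 \<le> card (?t p) \<and> ?t p \<inter> set (take i vs) \<noteq> {} \<and> vs ! i \<in> ?t p"
      using \<open>p < length es\<close> vi hd head_mem_trunc_edge by blast
  qed
  then have "card {p. in_Dk k vs es (vs ! i) p} \<le> dcount (Ek k vs es) [set (take i vs), {vs ! i}]"
    unfolding dcount_def size_filter_Ek by (intro card_mono) auto
  then show ?thesis
    using card_in_Dk dcount_prefix_nth_eq_card_backward[OF assms] by metis
qed

lemma dcount_Ek_prefix_nth_le:
  assumes "distinct vs" "i < j" "j < length vs" "\<And>e. e \<in> set es \<Longrightarrow> e \<subseteq> set vs"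
  shows "dcount (Ek k vs es) [set (take i vs), {vs ! j}] \<le>
    min k (dcount (mset es) [set (take i vs), {vs ! j}])"
proof -
  let ?t = "trunc_edge k vs es"
  define S where "S =
    {p. p < length es \<and> 2 \<le> card (?t p) \<and> ?t p \<inter> set (take i vs) \<noteq> {} \<and> vs ! j \<in> ?t p}"
  have in_S: "in_Dk k vs es (vs ! j) p \<and> es ! p \<inter> set (take i vs) \<noteq> {} \<and> vs ! j \<in> es ! p"
    if "p \<in> S" for p
  proof -
    have p: "p < length es" "2 \<le> card (?t p)" "?t p \<inter> set (take i vs) \<noteq> {}" "vs ! j \<in> ?t p"
      using that by (auto simp: S_def)
    have sub: "es ! p \<subseteq> set vs" using assms(4) p(1) by simp
    have ne: "es ! p \<noteq> {}"
    proof
      assume "es ! p = {}"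
      then have "?t p = {head vs (es ! p)}" by (simp add: trunc_edge_def)
      then show False using p(2) by simp
    qed
    have meets: "es ! p \<inter> set (take i vs) \<noteq> {}"
      using p(3) trunc_edge_subset[OF sub ne] by blast
    have "head vs (es ! p) \<noteq> vs ! j"
    proof
      assume "head vs (es ! p) = vs ! j"
      then have "hidx vs (es ! p) = j"
        using hidx_less_length_and_head_mem(1)[OF sub ne] assms(1,3)
        unfolding head_def by (simp add: nth_eq_iff_index_eq)
      then show False using meets meets_prefix_iff_hidx_less[OF sub] assms(2) by simp
    qed
    then have "in_Dk k vs es (vs ! j) p" using p(4) by (simp add: trunc_edge_def)
    then show ?thesis using meets by (simp add: in_Dk_def backward_def)
  qed
  have "card S \<le> card {p. in_Dk k vs es (vs ! j) p}"
    using in_S by (intro card_mono) (auto simp: in_Dk_def backward_def S_def)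
  also have "\<dots> \<le> k" using card_in_Dk by (metis min.cobounded1)
  finally have "card S \<le> k" .
  moreover have "card S \<le> dcount (mset es) [set (take i vs), {vs ! j}]"
    unfolding dcount_mset_eq_card using in_S by (intro card_mono) (auto simp: S_def)
  ultimately show ?thesis unfolding dcount_def size_filter_Ek S_def by simp
qed

lemma is_MA_ordering_Ek:
  assumes "is_MA_ordering vs (mset es)" "\<And>e. e \<in> set es \<Longrightarrow> e \<subseteq> set vs"
  shows "is_MA_ordering vs (Ek k vs es)"
  unfolding is_MA_ordering_def
proof (intro conjI allI impI)
  show "distinct vs" using assms(1) by (simp add: is_MA_ordering_def)
  fix i j
  assume ij: "i < j \<and> j < length vs"
  then have "dcount (mset es) [set (take i vs), {vs ! j}] \<le> dcount (mset es) [set (take i vs), {vs ! i}]"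
    using assms(1) by (simp add: is_MA_ordering_def)
  then show "dcount (Ek k vs es) [set (take i vs), {vs ! j}] \<le> dcount (Ek k vs es) [set (take i vs), {vs ! i}]"
    using dcount_Ek_prefix_nth_le[OF \<open>distinct vs\<close> _ _ assms(2), where i = i and j = j and k = k]
      dcount_Ek_prefix_nth_ge[OF \<open>distinct vs\<close> _ assms(2), where i = i and k = k] ij
    by (meson le_trans min.mono order_refl less_trans)
qed

subsection \<open>Cuts in MA-orderings\<close>

definition crosses :: "'a set \<Rightarrow> 'a set \<Rightarrow> 'a set \<Rightarrow> bool" where
  "crosses V A e \<longleftrightarrow> e \<inter> A \<noteq> {} \<and> e \<inter> (V - A) \<noteq> {}"

lemma cut_size_eq_size_crosses: "cut_size V F A = size (filter_mset (crosses V A) F)"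
  unfolding cut_size_def crosses_def ..

definition prefix_cut :: "'a list \<Rightarrow> 'a set \<Rightarrow> 'a set multiset \<Rightarrow> nat \<Rightarrow> nat" where
  "prefix_cut vs A F t =
    size (filter_mset (\<lambda>e. crosses (set (take t vs)) A (e \<inter> set (take t vs))) F)"

lemma crosses_prefix_mono:
  assumes "crosses (set (take s vs)) A (e \<inter> set (take s vs))" "s \<le> t"
  shows "crosses (set (take t vs)) A (e \<inter> set (take t vs))"
  using assms set_take_subset_set_take[OF assms(2), of vs] unfolding crosses_def by blast

lemma prefix_cut_le_cut_size: "prefix_cut vs A F t \<le> cut_size (set vs) F A"
  unfolding prefix_cut_def cut_size_eq_size_crosses
  by (rule size_filter_mset_mono) (auto simp: crosses_def dest: in_set_takeD)

lemma prefix_cut_add_le: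
  assumes "i < l" "l < length vs" "\<forall>m. i \<le> m \<and> m < l \<longrightarrow> (vs ! m \<in> A) \<noteq> (vs ! l \<in> A)"
  shows "prefix_cut vs A F (Suc i) +
      size {#e \<in># F. vs ! l \<in> e \<and> e \<inter> set (take l vs) \<noteq> {} \<and> e \<inter> set (take i vs) = {}#}
    \<le> prefix_cut vs A F (Suc l)"
  unfolding prefix_cut_def
proof (rule size_filter_mset_add_le)
  have step: "set (take (Suc i) vs) = insert (vs ! i) (set (take i vs))"
    using assms(1,2) by (simp add: take_Suc_conv_app_nth)
  fix e
  show "\<not> (vs ! l \<in> e \<and> e \<inter> set (take l vs) \<noteq> {} \<and> e \<inter> set (take i vs) = {})"
    if "crosses (set (take (Suc i) vs)) A (e \<inter> set (take (Suc i) vs))"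
    using that unfolding step crosses_def by blast
  assume "crosses (set (take (Suc i) vs)) A (e \<inter> set (take (Suc i) vs)) \<or>
    vs ! l \<in> e \<and> e \<inter> set (take l vs) \<noteq> {} \<and> e \<inter> set (take i vs) = {}"
  then show "crosses (set (take (Suc l) vs)) A (e \<inter> set (take (Suc l) vs))"
  proof
    assume "crosses (set (take (Suc i) vs)) A (e \<inter> set (take (Suc i) vs))"
    then show ?thesis using crosses_prefix_mono assms(1) by fastforce
  next
    assume e: "vs ! l \<in> e \<and> e \<inter> set (take l vs) \<noteq> {} \<and> e \<inter> set (take i vs) = {}"
    then obtain m where m: "m < l" "vs ! m \<in> e" by (auto simp: in_set_take_iff)
    have "\<not> m < i"
    proof
      assume "m < i"
      then have "vs ! m \<in> set (take i vs)" using m(1) assms(2) by (simp add: nth_mem_set_take)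
      then show False using e m(2) by blast
    qed
    have "vs ! m \<in> set (take (Suc l) vs)" "vs ! l \<in> set (take (Suc l) vs)"
      using m(1) assms(2) by (simp_all add: nth_mem_set_take)
    moreover have "(vs ! m \<in> A) \<noteq> (vs ! l \<in> A)" using assms(3) m(1) \<open>\<not> m < i\<close> by simp
    ultimately show ?thesis using e m(2) unfolding crosses_def by blast
  qed
qed

lemma dcount_le_prefix_cut:
  assumes "is_MA_ordering vs F" "0 < l" "l < length vs" "(vs ! (l - 1) \<in> A) \<noteq> (vs ! l \<in> A)"
  shows "dcount F [set (take l vs), {vs ! l}] \<le> prefix_cut vs A F (Suc l)"
  using assms(2-4)
proof (induction l rule: less_induct)
  case (less l)
  \<comment> \<open>\<open>vs ! i, \<dots>, vs ! (l - 1)\<close> is the maximal run of vertices on the other side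
    of \<open>A\<close> from \<open>vs ! l\<close>. An edge counted on the left either meets \<open>take i vs\<close>,
    which is handled by the MA property and induction at the switch \<open>i\<close>, or it meets the
    run only, and then crosses \<open>A\<close> within \<open>take (Suc l) vs\<close> but not within
    \<open>take (Suc i) vs\<close>.\<close>
  obtain i where i: "i < l" "\<forall>m. i \<le> m \<and> m < l \<longrightarrow> (vs ! m \<in> A) \<noteq> (vs ! l \<in> A)"
    "0 < i \<longrightarrow> (vs ! (i - 1) \<in> A) = (vs ! l \<in> A)"
    using exists_run_start[of l "\<lambda>m. (vs ! m \<in> A) \<noteq> (vs ! l \<in> A)", OF less.prems(1,3)] by meson
  have "dcount F [set (take i vs), {vs ! l}] \<le> prefix_cut vs A F (Suc i)"
  proof (cases "i = 0")
    case False
    have "dcount F [set (take i vs), {vs ! l}] \<le> dcount F [set (take i vs), {vs ! i}]"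
      using assms(1) i(1) less.prems(2) unfolding is_MA_ordering_def by blast
    also have "\<dots> \<le> prefix_cut vs A F (Suc i)"
    proof (rule less.IH)
      show "(vs ! (i - 1) \<in> A) \<noteq> (vs ! i \<in> A)" using False i by simp
    qed (use False i less.prems(2) in auto)
    finally show ?thesis .
  qed (simp add: dcount_def)
  moreover have "dcount F [set (take l vs), {vs ! l}] \<le> dcount F [set (take i vs), {vs ! l}] +
      size {#e \<in># F. vs ! l \<in> e \<and> e \<inter> set (take l vs) \<noteq> {} \<and> e \<inter> set (take i vs) = {}#}"
    unfolding dcount_def by (rule size_filter_mset_le_add) auto
  moreover note prefix_cut_add_le[OF i(1) less.prems(2) i(2), of F]
  ultimately show ?case by linarith
qed

lemma cut_size_ge_dcount_at_switch:
  assumes "is_MA_ordering vs F" "0 < l" "l < length vs" "(vs ! (l - 1) \<in> A) \<noteq> (vs ! l \<in> A)"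
  shows "dcount F [set (take l vs), {vs ! l}] \<le> cut_size (set vs) F A"
  using dcount_le_prefix_cut[OF assms] prefix_cut_le_cut_size by (rule le_trans)


lemma two_le_card_if_crosses: "finite e \<Longrightarrow> crosses V A e \<Longrightarrow> 2 \<le> card e"
proof -
  assume "finite e" "crosses V A e"
  then obtain x y where "x \<in> e" "x \<in> A" "y \<in> e" "y \<notin> A" unfolding crosses_def by blast
  then show "2 \<le> card e" using two_le_card[OF \<open>finite e\<close>] by metis
qed

lemma cut_size_le_cut_size_Ek:
  assumes "\<And>e. e \<in> set es \<Longrightarrow> finite e"
    and "\<forall>p < length es. crosses V A (es ! p) \<longrightarrow> crosses V A (trunc_edge k vs es p)"
  shows "cut_size V (mset es) A \<le> cut_size V (Ek k vs es) A"
  unfolding cut_size_eq_size_crosses size_filter_mset_mset size_filter_Ek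
proof (rule card_mono)
  show "{p. p < length es \<and> crosses V A (es ! p)} \<subseteq>
    {p. p < length es \<and> 2 \<le> card (trunc_edge k vs es p) \<and> crosses V A (trunc_edge k vs es p)}"
  proof (intro subsetI CollectI conjI)
    fix p
    assume p: "p \<in> {p. p < length es \<and> crosses V A (es ! p)}"
    then show "p < length es" by simp
    show cr: "crosses V A (trunc_edge k vs es p)" using assms(2) p by simp
    show "2 \<le> card (trunc_edge k vs es p)"
      using two_le_card_if_crosses[OF finite_trunc_edge[OF assms(1)[OF nth_mem]] cr] p by simp
  qed
qed simp

lemma uncrossed_trunc_edge_drops_vertex:
  assumes "es ! p \<subseteq> set vs" "crosses (set vs) A (es ! p)"
    and "\<not> crosses (set vs) A (trunc_edge k vs es p)"
  obtains b where "b < length vs" "hidx vs (es ! p) < b" "vs ! b \<in> es ! p"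
    "vs ! b \<notin> trunc_edge k vs es p" "(vs ! hidx vs (es ! p) \<in> A) \<noteq> (vs ! b \<in> A)"
proof -
  let ?h = "head vs (es ! p)"
  have ne: "es ! p \<noteq> {}" using assms(2) by (auto simp: crosses_def)
  have h: "?h \<in> es ! p" "?h \<in> trunc_edge k vs es p"
    using hidx_less_length_and_head_mem(2)[OF assms(1) ne] head_mem_trunc_edge by auto
  obtain v where v: "v \<in> es ! p" "(v \<in> A) \<noteq> (?h \<in> A)"
    using assms(2) h(1) unfolding crosses_def by blast
  then have "v \<notin> trunc_edge k vs es p"
    using assms(1,3) h unfolding crosses_def by blast
  moreover obtain b where b: "b < length vs" "v = vs ! b"
    using v(1) assms(1) by (metis in_set_conv_nth subsetD)
  moreover have "hidx vs (es ! p) < b"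
    using hidx_le[OF b(1)] v b unfolding head_def by (metis le_neq_implies_less)
  ultimately show thesis using that v unfolding head_def by metis
qed

lemma dropped_vertex_has_k_earlier_backward_edges:
  assumes "p < length es" "v \<in> es ! p" "head vs (es ! p) \<noteq> v" "v \<notin> trunc_edge k vs es p"
  shows "k \<le> card {q. q < p \<and> backward vs es v q}"
  using assms unfolding trunc_edge_def in_Dk_def backward_def by auto

lemma card_earlier_backward_le_dcount:
  assumes "sorted (map (hidx vs) es)" "p < length es" "hidx vs (es ! p) < l"
    and "\<And>e. e \<in> set es \<Longrightarrow> e \<subseteq> set vs"
  shows "card {q. q < p \<and> backward vs es v q} \<le> dcount (mset es) [set (take l vs), {v}]"
  unfolding dcount_mset_eq_card
proof (rule card_mono)
  show "{q. q < p \<and> backward vs es v q} \<subseteq>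
      {q. q < length es \<and> es ! q \<inter> set (take l vs) \<noteq> {} \<and> v \<in> es ! q}"
  proof (intro subsetI CollectI)
    fix q
    assume "q \<in> {q. q < p \<and> backward vs es v q}"
    then have q: "q < p" "v \<in> es ! q" by (auto simp: backward_def)
    have "q < length es" using q(1) assms(2) by simp
    have "hidx vs (es ! q) \<le> hidx vs (es ! p)"
      using sorted_nth_mono[OF assms(1), of q p] q(1) assms(2) by simp
    then have "es ! q \<inter> set (take l vs) \<noteq> {}"
      using meets_prefix_iff_hidx_less[OF assms(4)[OF nth_mem[OF \<open>q < length es\<close>]]] q(2) assms(3)
      by auto
    then show "q < length es \<and> es ! q \<inter> set (take l vs) \<noteq> {} \<and> v \<in> es ! q"
      using q assms(2) by simp
  qed
qed simp

lemma k_le_cut_size_Ek: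
  assumes MA: "is_MA_ordering vs (mset es)" and "sorted (map (hidx vs) es)"
    and sub: "\<And>e. e \<in> set es \<Longrightarrow> e \<subseteq> set vs"
    and "p < length es" "crosses (set vs) A (es ! p)" "\<not> crosses (set vs) A (trunc_edge k vs es p)"
  shows "k \<le> cut_size (set vs) (Ek k vs es) A"
proof -
  let ?a = "hidx vs (es ! p)"
  obtain b where b: "b < length vs" "?a < b" "vs ! b \<in> es ! p" "vs ! b \<notin> trunc_edge k vs es p"
    "(vs ! ?a \<in> A) \<noteq> (vs ! b \<in> A)"
    using uncrossed_trunc_edge_drops_vertex[OF sub[OF nth_mem] assms(5,6)] assms(4) by blast
  obtain l where l: "?a < l" "l \<le> b" "(vs ! (l - 1) \<in> A) \<noteq> (vs ! l \<in> A)"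
    using exists_switch[OF b(2), of "\<lambda>m. vs ! m \<in> A"] b(5) by blast
  have "distinct vs" using MA by (simp add: is_MA_ordering_def)
  have "k \<le> card {q. q < p \<and> backward vs es (vs ! b) q}"
    using dropped_vertex_has_k_earlier_backward_edges[OF assms(4) b(3) _ b(4)] b(5) unfolding head_def by metis
  also have "\<dots> \<le> dcount (mset es) [set (take l vs), {vs ! b}]"
    using card_earlier_backward_le_dcount[OF assms(2,4) l(1) sub] .
  also have "\<dots> \<le> dcount (mset es) [set (take l vs), {vs ! l}]"
    using MA l(2) b(1) unfolding is_MA_ordering_def by (cases "l = b") auto
  finally have "k \<le> dcount (Ek k vs es) [set (take l vs), {vs ! l}]"
    using dcount_Ek_prefix_nth_ge[OF \<open>distinct vs\<close> _ sub, where i = l and k = k and es = es] l(2) b(1) by simp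
  also have "\<dots> \<le> cut_size (set vs) (Ek k vs es) A"
    using cut_size_ge_dcount_at_switch[OF is_MA_ordering_Ek[OF MA sub]] l b(1) by simp
  finally show ?thesis .
qed

theorem mainTheorem2:
  fixes vs :: "'a list" and E :: "'a set multiset" and es :: "'a set list"
    and k :: nat and A :: "'a set"
  assumes "\<forall>e\<in>#E. e \<subseteq> set vs"
    and "is_MA_ordering vs E"
    and "is_head_ordering vs E es"
    and "A \<subseteq> set vs"
  shows "cut_size (set vs) (Ek k vs es) A \<ge> min k (cut_size (set vs) E A)"
proof -
  \<comment> \<open>Crossing is measured relative to \<open>set vs\<close>.\<close>
  have E: "E = mset es" and sorted: "sorted (map (hidx vs) es)"
    using assms(3) unfolding is_head_ordering_def by auto
  have sub: "\<And>e. e \<in> set es \<Longrightarrow> e \<subseteq> set vs" using assms(1) E by simp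
  show ?thesis
  proof (cases "\<forall>p < length es. crosses (set vs) A (es ! p) \<longrightarrow>
      crosses (set vs) A (trunc_edge k vs es p)")
    case True
    then show ?thesis
      using cut_size_le_cut_size_Ek[OF finite_subset[OF sub]] E by fastforce
  next
    case False
    then obtain p where "p < length es" "crosses (set vs) A (es ! p)"
      "\<not> crosses (set vs) A (trunc_edge k vs es p)" by blast
    then show ?thesis using k_le_cut_size_Ek[OF _ sorted sub] assms(2) E by fastforce
  qed
qed

end
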